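(* Let $p,q$ be distinct odd primes with $p\equiv 1\pmod 4$, $q\equiv 3\pmod 4$ and $\gcd(p-1,q-1)=2$, having a common primitive root $g$. With the Gauss periods $\eta_0,\eta_1,\delta_0^{p},\delta_1^{p},\delta_0^{q},\delta_1^{q}$ defined in the context, $$\eta_0^{2}\left(\delta_1^{p}\delta_1^{q}+\delta_0^{p}\delta_0^{q}\right)+\eta_1^{2}\left(\delta_1^{p}\delta_0^{q}+\delta_0^{p}\delta_1^{q}\right)=\frac{1-pq}{4}+\epsilon\,\frac{pq}{2}$$ for some sign $\epsilon\in\{1,-1\}$.
   Context: Let $N=pq$ and $e=(p-1)(q-1)/2$. Let $x$ be the unique element of $\mathbb{Z}_N$ with $x\equiv g\pmod p$ and $x\equiv 1\pmod q$. The Whiteman generalized cyclotomic classes of order 2 are $D_i=\{g^{s}x^{i}\bmod N: s=0,1,\dots,e-1\}$ for $i=0,1$; they partition the unit group $\mathbb{Z}_N^{*}$. For a prime $r\in\{p,q\}$, the classical cyclotomic classes are $D_0^{(r)}=\{g^{2t}\bmod r: 0\le t\le \frac{r-1}{2}-1\}$ and $D_1^{(r)}=\{g^{2t+1}\bmod r: 0\le t\le \frac{r-1}{2}-1\}$. Let $\omega_r=e^{2\pi i/r}$ and $\omega_N=e^{2\pi i/N}$. The Gauss periods are $\delta_j^{r}=\sum_{k\in D_j^{(r)}}\omega_r^{k}$ for $r\in\{p,q\}$, $j=0,1$, and $\eta_j=\sum_{k\in D_j}\omega_N^{k}$ for $j=0,1$. *)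

theory Defs
  imports "HOL-Analysis.Analysis" "HOL-Number_Theory.Number_Theory"
begin

text \<open>Whiteman generalized cyclotomy of order 2 for N = p q.\<close>

definition wh_e :: "nat \<Rightarrow> nat \<Rightarrow> nat" where
  "wh_e p q = (p - 1) * (q - 1) div 2"

definition wh_x :: "nat \<Rightarrow> nat \<Rightarrow> nat \<Rightarrow> nat" where
  "wh_x p q g = (THE x. x < p * q \<and> [x = g] (mod p) \<and> [x = 1] (mod q))"

definition wh_D :: "nat \<Rightarrow> nat \<Rightarrow> nat \<Rightarrow> nat \<Rightarrow> nat set" where
  "wh_D p q g i = {(g ^ s * wh_x p q g ^ i) mod (p * q) | s. s < wh_e p q}"

definition cyc_D :: "nat \<Rightarrow> nat \<Rightarrow> nat \<Rightarrow> nat set" where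
  "cyc_D r g j = {g ^ (2 * t + j) mod r | t. t < (r - 1) div 2}"

definition unit_root :: "nat \<Rightarrow> nat \<Rightarrow> complex" where
  "unit_root n k = exp (2 * of_real pi * \<i> * of_nat k / of_nat n)"

definition gauss_delta :: "nat \<Rightarrow> nat \<Rightarrow> nat \<Rightarrow> complex" where
  "gauss_delta r g j = (\<Sum>k\<in>cyc_D r g j. unit_root r k)"

definition gauss_eta :: "nat \<Rightarrow> nat \<Rightarrow> nat \<Rightarrow> nat \<Rightarrow> complex" where
  "gauss_eta p q g j = (\<Sum>k\<in>wh_D p q g j. unit_root (p * q) k)"

end

theory Submission
  imports Defs
begin

text \<open>
  Write \<open>\<chi>\<^sub>r\<close> for the Legendre symbol modulo \<open>r\<close> and \<open>G\<^sub>r = \<Sum>\<^sub>a \<chi>\<^sub>r(a) \<omega>\<^sub>r\<^sup>a\<close> for the quadratic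
  Gauss sum. The classical classes are the level sets \<open>\<chi>\<^sub>r = (-1)\<^sup>j\<close>, so
  \<open>\<delta>\<^sub>0 + \<delta>\<^sub>1 = -1\<close>, \<open>\<delta>\<^sub>0 - \<delta>\<^sub>1 = G\<^sub>r\<close>, and \<open>G\<^sub>r\<^sup>2 = \<chi>\<^sub>r(-1) r\<close>.
  Since \<open>\<chi>\<^sub>p(g) = \<chi>\<^sub>q(g) = -1\<close>, \<open>\<chi>\<^sub>p(x) = -1\<close> and \<open>\<chi>\<^sub>q(x) = 1\<close>, the Whiteman class \<open>D\<^sub>i\<close>
  lies in the level set \<open>\<chi>\<^sub>p \<chi>\<^sub>q = (-1)\<^sup>i\<close> of the units; \<open>gcd (p - 1) (q - 1) = 2\<close> makes
  \<open>g\<close> have order \<open>e\<close> modulo \<open>N\<close>, so \<open>|D\<^sub>i| = e\<close> and counting gives equality.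
  The Chinese remainder theorem then factors the Whiteman periods:
  \<open>\<eta>\<^sub>0 + \<eta>\<^sub>1 = (-1)(-1) = 1\<close> and \<open>\<eta>\<^sub>0 - \<eta>\<^sub>1 = \<plusminus>G\<^sub>p G\<^sub>q\<close>. With \<open>G\<^sub>p\<^sup>2 = p\<close> and
  \<open>G\<^sub>q\<^sup>2 = -q\<close> for \<open>p \<equiv> 1\<close>, \<open>q \<equiv> 3 (mod 4)\<close>, solving for the periods gives the identity.
\<close>

section \<open>Roots of unity\<close>

lemma unit_root_add: "unit_root n (a + b) = unit_root n a * unit_root n b"
  unfolding unit_root_def by (simp add: exp_add[symmetric] add_divide_distrib distrib_left distrib_right)

lemma unit_root_multiple: assumes "n > 0" shows "unit_root n (n * m) = 1"
proof -
  have "unit_root n (n * m) = exp ((2 * of_nat m * pi) * \<i>)"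
    unfolding unit_root_def using assms by (simp add: field_simps)
  also have "\<dots> = 1" by (rule exp_integer_2pi) simp
  finally show ?thesis .
qed

lemma unit_root_mod: assumes "n > 0" shows "unit_root n (k mod n) = unit_root n k"
proof -
  have "unit_root n k = unit_root n (k mod n) * unit_root n (n * (k div n))"
    by (simp add: unit_root_add[symmetric])
  thus ?thesis using unit_root_multiple[OF assms] by simp
qed

lemma unit_root_cancel: assumes "m > 0" shows "unit_root (m * n) (m * k) = unit_root n k"
  unfolding unit_root_def using assms by (simp add: field_simps)

lemma unit_root_mult: "unit_root n (a * m) = unit_root n m ^ a"
  unfolding unit_root_def by (simp add: exp_of_nat_mult[symmetric] field_simps)

lemma unit_root_eq_1_imp_dvd: assumes "n > 0" "unit_root n m = 1" shows "n dvd m"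
proof -
  from assms(2) obtain j :: int
    where j: "Im (2 * of_real pi * \<i> * of_nat m / of_nat n) = of_int (2 * j) * pi"
    unfolding unit_root_def exp_eq_1 by blast
  hence "2 * pi * m / n = 2 * j * pi" by simp
  hence "real m = real n * j" using assms(1) pi_gt_zero by (simp add: field_simps)
  hence "int m = int n * j" by (metis of_int_eq_iff of_int_mult of_int_of_nat_eq)
  thus ?thesis by (metis dvd_triv_left int_dvd_int_iff)
qed

lemma sum_unit_root_powers: assumes "n > 0"
  shows "(\<Sum>a<n. unit_root n (a * m)) = (if n dvd m then of_nat n else 0)"
proof (cases "n dvd m")
  case True
  then obtain c where "m = n * c" by blast
  hence "unit_root n (a * m) = 1" for a using unit_root_multiple[OF assms, of "a * c"] by (simp add: ac_simps)
  thus ?thesis using True by simp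
next
  case False
  hence "unit_root n m \<noteq> 1" using unit_root_eq_1_imp_dvd[OF assms] by blast
  moreover have "unit_root n m ^ n = 1"
    using unit_root_mult[of n n m] unit_root_multiple[OF assms, of m] by simp
  ultimately show ?thesis using False by (simp add: unit_root_mult sum_gp_strict)
qed

lemma sum_mult_mod_reindex:
  fixes H :: "nat \<Rightarrow> 'a::comm_monoid_add"
  assumes "coprime u r"
  shows "(\<Sum>a<r. H (u * a mod r)) = (\<Sum>a<r. H a)"
proof (cases "r = 0")
  case False
  let ?f = "\<lambda>a. u * a mod r"
  have inj: "inj_on ?f {..<r}"
  proof
    fix a b assume "a \<in> {..<r}" "b \<in> {..<r}" "?f a = ?f b"
    moreover from \<open>?f a = ?f b\<close> have "[a = b] (mod r)"
      using assms by (simp add: cong_def[symmetric] cong_mult_lcancel_nat coprime_commute)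
    ultimately show "a = b" by (simp add: cong_less_modulus_unique_nat)
  qed
  moreover have "?f ` {..<r} \<subseteq> {..<r}" using False by auto
  ultimately have "?f ` {..<r} = {..<r}" by (simp add: card_image card_subset_eq)
  thus ?thesis using sum.reindex[OF inj, of H] by simp
qed simp

section \<open>The quadratic character and its Gauss sum\<close>

lemma prime_coprime_iff_not_dvd: "prime (r::nat) \<Longrightarrow> coprime k r \<longleftrightarrow> \<not> r dvd k"
  by (metis coprime_absorb_right coprime_commute not_prime_unit prime_imp_coprime)

definition quad_char :: "nat \<Rightarrow> nat \<Rightarrow> int" where
  "quad_char r a = Legendre (int a) (int r)"

definition quad_gauss_sum :: "nat \<Rightarrow> complex" where
  "quad_gauss_sum r = (\<Sum>a<r. of_int (quad_char r a) * unit_root r a)"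

lemma quad_char_cong: assumes "[a = b] (mod r)" shows "quad_char r a = quad_char r b"
proof -
  have "[int a = int b] (mod int r)" using assms by (simp add: cong_int_iff)
  hence "[int a = 0] (mod int r) \<longleftrightarrow> [int b = 0] (mod int r)"
    and "QuadRes (int r) (int a) \<longleftrightarrow> QuadRes (int r) (int b)"
    unfolding QuadRes_def by (meson cong_sym cong_trans)+
  thus ?thesis by (simp add: quad_char_def Legendre_def)
qed

lemma quad_char_mod [simp]: "quad_char r (a mod r) = quad_char r a"
  by (rule quad_char_cong) (simp add: cong_def)

lemma quad_char_range: "quad_char r a \<in> {-1, 0, 1}"
  unfolding quad_char_def Legendre_def by auto

lemma quad_char_eq_0_iff: "quad_char r a = 0 \<longleftrightarrow> r dvd a"
  unfolding quad_char_def Legendre_def by (auto simp: cong_0_iff)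

lemma quad_char_square: "(quad_char r a)\<^sup>2 = (if r dvd a then 0 else 1)"
  using quad_char_range[of r a] quad_char_eq_0_iff[of r a] by (auto simp: power2_eq_square)

lemma sign_cong_imp_eq:
  fixes x y :: int
  assumes "x \<in> {-1, 0, 1}" "y \<in> {-1, 0, 1}" "r > 2" "[x = y] (mod int r)"
  shows "x = y"
proof -
  obtain k where k: "x - y = int r * k" using assms(4) by (auto simp: cong_iff_dvd_diff)
  have "\<bar>x - y\<bar> < int r" using assms(1-3) by auto
  moreover have "int r \<le> \<bar>x - y\<bar>" if "k \<noteq> 0"
    using that k mult_left_mono[of 1 "\<bar>k\<bar>" "int r"] by (simp add: abs_mult)
  ultimately have "k = 0" by fastforce
  thus ?thesis using k by simp
qed

context
  fixes r :: nat
  assumes r: "prime r" "r > 2"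
begin

lemma quad_char_euler: "[quad_char r a = int a ^ ((r - 1) div 2)] (mod int r)"
  using euler_criterion[of r "int a"] r by (simp add: quad_char_def)

lemma quad_char_mult: "quad_char r (a * b) = quad_char r a * quad_char r b"
proof (rule sign_cong_imp_eq[OF quad_char_range _ r(2)])
  show "quad_char r a * quad_char r b \<in> {-1, 0, 1}"
    using quad_char_range[of r a] quad_char_range[of r b] by auto
  have "[quad_char r a * quad_char r b = int a ^ ((r - 1) div 2) * int b ^ ((r - 1) div 2)] (mod int r)"
    by (intro cong_mult quad_char_euler)
  moreover have "[quad_char r (a * b) = int a ^ ((r - 1) div 2) * int b ^ ((r - 1) div 2)] (mod int r)"
    using quad_char_euler[of "a * b"] by (simp add: power_mult_distrib)
  ultimately show "[quad_char r (a * b) = quad_char r a * quad_char r b] (mod int r)"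
    by (meson cong_sym cong_trans)
qed

lemma quad_char_1: "quad_char r 1 = 1"
proof -
  have "\<not> [1 = 0] (mod int r)" using r by (auto simp: cong_def)
  moreover have "QuadRes (int r) 1" unfolding QuadRes_def by (rule exI[of _ 1]) simp
  ultimately show ?thesis by (simp add: quad_char_def Legendre_def)
qed

lemma quad_char_power: "quad_char r (a ^ n) = quad_char r a ^ n"
  by (induction n) (simp_all only: power_0 power_Suc quad_char_1 quad_char_mult)

lemma quad_char_primroot: assumes "residue_primroot r g" shows "quad_char r g = -1"
proof -
  have ord: "ord r g = r - 1" and "coprime g r"
    using assms r by (auto simp: residue_primroot_def totient_prime coprime_commute)
  hence "\<not> r dvd g" using r by (simp add: prime_coprime_iff_not_dvd)
  hence "quad_char r g \<noteq> 0" by (simp add: quad_char_eq_0_iff)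
  moreover have "quad_char r g \<noteq> 1"
  proof
    assume "quad_char r g = 1"
    hence "[int (g ^ ((r - 1) div 2)) = int 1] (mod int r)"
      using quad_char_euler[of g] by (simp add: cong_sym_eq)
    hence "[g ^ ((r - 1) div 2) = 1] (mod r)" by (simp only: cong_int_iff)
    hence "r - 1 dvd (r - 1) div 2" using ord_divides[of g "(r - 1) div 2" r] ord by simp
    moreover have "0 < (r - 1) div 2" "(r - 1) div 2 < r - 1" using r by auto
    ultimately show False by (meson nat_dvd_not_less)
  qed
  ultimately show ?thesis using quad_char_range[of r g] by simp
qed

lemma quad_char_minus_1: "quad_char r (r - 1) = (-1) ^ ((r - 1) div 2)"
proof (rule sign_cong_imp_eq[OF quad_char_range _ r(2)])
  show "(-1::int) ^ ((r - 1) div 2) \<in> {-1, 0, 1}" by (cases "even ((r - 1) div 2)") auto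
  have "[int (r - 1) = -1] (mod int r)" using r by (simp add: cong_iff_dvd_diff)
  hence "[int (r - 1) ^ ((r - 1) div 2) = (-1) ^ ((r - 1) div 2)] (mod int r)" by (rule cong_pow)
  thus "[quad_char r (r - 1) = (-1) ^ ((r - 1) div 2)] (mod int r)"
    by (rule cong_trans[OF quad_char_euler])
qed

lemma sum_quad_char: "(\<Sum>a<r. quad_char r a) = 0"
proof -
  obtain g where g: "residue_primroot r g" using prime_primitive_root_exists[of r] r by auto
  hence "coprime g r" by (simp add: residue_primroot_def coprime_commute)
  hence "(\<Sum>a<r. quad_char r a) = (\<Sum>a<r. quad_char r (g * a mod r))"
    by (rule sum_mult_mod_reindex[symmetric])
  also have "\<dots> = - (\<Sum>a<r. quad_char r a)"
    by (simp add: quad_char_mult quad_char_primroot[OF g] sum_negf)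
  finally show ?thesis by simp
qed

lemma quad_gauss_sum_twist:
  assumes "coprime u r"
  shows "(\<Sum>a<r. of_int (quad_char r a) * unit_root r (u * a)) = of_int (quad_char r u) * quad_gauss_sum r"
    (is "?S = _")
proof -
  have "(quad_char r u)\<^sup>2 = 1" using assms r by (simp add: quad_char_square prime_coprime_iff_not_dvd)
  have "quad_gauss_sum r = (\<Sum>a<r. of_int (quad_char r (u * a mod r)) * unit_root r (u * a mod r))"
    unfolding quad_gauss_sum_def by (rule sum_mult_mod_reindex[OF assms, symmetric])
  also have "\<dots> = of_int (quad_char r u) * ?S"
    using r by (simp add: unit_root_mod quad_char_mult sum_distrib_left mult.assoc)
  finally have "of_int (quad_char r u) * quad_gauss_sum r = of_int ((quad_char r u)\<^sup>2) * ?S"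
    by (simp add: power2_eq_square)
  thus ?thesis using \<open>(quad_char r u)\<^sup>2 = 1\<close> by simp
qed

lemma sum_quad_char_square_unit_root:
  "(\<Sum>a<r. (of_int (quad_char r a))\<^sup>2 * unit_root r (a * m)) = (if r dvd m then of_nat r else 0) - 1"
proof -
  have "(\<Sum>a<r. (of_int (quad_char r a))\<^sup>2 * unit_root r (a * m))
      = (\<Sum>a<r. unit_root r (a * m) - (if a = 0 then 1 else 0))"
  proof (rule sum.cong[OF refl])
    fix a assume "a \<in> {..<r}"
    hence "r dvd a \<longleftrightarrow> a = 0" by auto
    thus "(of_int (quad_char r a))\<^sup>2 * unit_root r (a * m) = unit_root r (a * m) - (if a = 0 then 1 else 0)"
      by (auto simp: quad_char_square unit_root_def simp flip: of_int_power)
  qed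
  also have "\<dots> = (if r dvd m then of_nat r else 0) - 1"
    using r sum_unit_root_powers[of r m] by (simp add: sum_subtractf)
  finally show ?thesis .
qed

lemma quad_gauss_sum_square_row:
  "(\<Sum>b<r. of_int (quad_char r a) * of_int (quad_char r b) * unit_root r (a + b))
     = (\<Sum>t<r. (of_int (quad_char r a))\<^sup>2 * of_int (quad_char r t) * unit_root r (a * (1 + t)))"
proof (cases "r dvd a")
  case False
  hence "coprime a r" using r by (simp add: prime_coprime_iff_not_dvd)
  hence "(\<Sum>b<r. of_int (quad_char r a) * of_int (quad_char r b) * unit_root r (a + b))
      = (\<Sum>t<r. of_int (quad_char r a) * of_int (quad_char r (a * t mod r)) * unit_root r (a + a * t mod r))"
    by (rule sum_mult_mod_reindex[symmetric])
  also have "\<dots> = (\<Sum>t<r. (of_int (quad_char r a))\<^sup>2 * of_int (quad_char r t) * unit_root r (a * (1 + t)))"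
    using r by (simp add: unit_root_add unit_root_mod quad_char_mult power2_eq_square distrib_left mult_ac)
  finally show ?thesis .
qed (simp add: quad_char_eq_0_iff[THEN iffD2])

lemma quad_gauss_sum_square: "(quad_gauss_sum r)\<^sup>2 = of_int (quad_char r (r - 1)) * of_nat r"
proof -
  have dvd_iff: "r dvd (1 + t) \<longleftrightarrow> t = r - 1" if "t < r" for t
    using that r by (auto dest: dvd_imp_le)
  have inner: "(\<Sum>a<r. (of_int (quad_char r a))\<^sup>2 * unit_root r (a * (1 + t)))
      = (if t = r - 1 then of_nat r else 0) - 1" if "t \<in> {..<r}" for t
    using that by (simp only: sum_quad_char_square_unit_root lessThan_iff dvd_iff)
  have "(quad_gauss_sum r)\<^sup>2
      = (\<Sum>a<r. \<Sum>b<r. of_int (quad_char r a) * of_int (quad_char r b) * unit_root r (a + b))"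
    unfolding quad_gauss_sum_def power2_eq_square sum_product by (simp add: unit_root_add mult_ac)
  also have "\<dots> = (\<Sum>a<r. \<Sum>t<r. (of_int (quad_char r a))\<^sup>2 * of_int (quad_char r t) * unit_root r (a * (1 + t)))"
    by (simp only: quad_gauss_sum_square_row)
  also have "\<dots> = (\<Sum>t<r. of_int (quad_char r t)
      * (\<Sum>a<r. (of_int (quad_char r a))\<^sup>2 * unit_root r (a * (1 + t))))"
    by (subst sum.swap) (simp add: sum_distrib_left mult_ac)
  also have "\<dots> = (\<Sum>t<r. (if t = r - 1 then of_int (quad_char r t) * of_nat r else 0) - of_int (quad_char r t))"
    by (rule sum.cong[OF refl], simp only: inner, simp add: algebra_simps)
  also have "\<dots> = of_int (quad_char r (r - 1)) * of_nat r - of_int (\<Sum>t<r. quad_char r t)"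
    using r by (simp add: sum_subtractf sum.delta')
  finally show ?thesis by (simp add: sum_quad_char)
qed

end

section \<open>Classical cyclotomic classes of order 2\<close>

context
  fixes r g :: nat
  assumes r: "prime r" "r > 2" and g: "residue_primroot r g"
begin

lemma cyc_D_eq:
  assumes "j \<le> 1"
  shows "cyc_D r g j = {k. k < r \<and> quad_char r k = (-1) ^ j}"
proof (intro equalityI subsetI)
  fix k assume "k \<in> cyc_D r g j"
  then obtain t where t: "k = g ^ (2 * t + j) mod r" unfolding cyc_D_def by blast
  hence "quad_char r k = (-1) ^ (2 * t + j)"
    by (simp only: quad_char_mod quad_char_power[OF r] quad_char_primroot[OF r g])
  thus "k \<in> {k. k < r \<and> quad_char r k = (-1) ^ j}" using t r by (simp add: power_add)
next
  fix k assume "k \<in> {k. k < r \<and> quad_char r k = (-1) ^ j}"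
  hence k: "k < r" "quad_char r k = (-1) ^ j" by auto
  hence "\<not> r dvd k" by (auto simp: quad_char_eq_0_iff[symmetric])
  hence "k \<in> totatives r"
    using k(1) r by (auto simp: totatives_def prime_coprime_iff_not_dvd intro!: Nat.gr0I)
  moreover have "bij_betw (\<lambda>i. g ^ i mod r) {..<totient r} (totatives r)"
    using r g by (intro residue_primroot_is_generator) auto
  ultimately obtain i where i: "i < r - 1" "k = g ^ i mod r"
    using r by (auto simp: bij_betw_def totient_prime)
  have "(-1::int) ^ i = (-1) ^ j"
    using k(2) i(2) r by (simp add: quad_char_power quad_char_primroot[OF r g])
  hence "even i \<longleftrightarrow> even j" by (simp add: minus_one_power_iff split: if_splits)
  hence "i mod 2 = j" using assms
    by (metis One_nat_def le_Suc_eq le_zero_eq odd_iff_mod_2_eq_one even_iff_mod_2_eq_zero odd_one even_zero)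
  hence "i = 2 * (i div 2) + j" using div_mult_mod_eq[of i 2] by linarith
  moreover have "i div 2 < (r - 1) div 2"
  proof (rule less_mult_imp_div_less)
    have "odd r" using r by (simp add: prime_odd_nat)
    thus "i < (r - 1) div 2 * 2" using i(1) by simp
  qed
  ultimately show "k \<in> cyc_D r g j" unfolding cyc_D_def using i(2) by (intro CollectI exI[of _ "i div 2"]) simp
qed

lemma gauss_delta_eq_sum:
  assumes "j \<le> 1"
  shows "gauss_delta r g j = (\<Sum>k<r. if quad_char r k = (-1) ^ j then unit_root r k else 0)"
  unfolding gauss_delta_def cyc_D_eq[OF assms] using sum.inter_filter[of "{..<r}"] by simp

lemma gauss_delta_add: "gauss_delta r g 0 + gauss_delta r g 1 = -1"
proof -
  have "gauss_delta r g 0 + gauss_delta r g 1 = (\<Sum>k<r. (of_int (quad_char r k))\<^sup>2 * unit_root r (k * 1))"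
    unfolding gauss_delta_eq_sum[OF le0] gauss_delta_eq_sum[OF le_refl] sum.distrib[symmetric]
    by (rule sum.cong[OF refl]) (use quad_char_range[of r] in auto)
  thus ?thesis using r by (simp only: sum_quad_char_square_unit_root) simp
qed

lemma gauss_delta_diff: "gauss_delta r g 0 - gauss_delta r g 1 = quad_gauss_sum r"
  unfolding gauss_delta_eq_sum[OF le0] gauss_delta_eq_sum[OF le_refl] quad_gauss_sum_def
    sum_subtractf[symmetric]
  by (rule sum.cong[OF refl]) (use quad_char_range[of r] in auto)

end

section \<open>Whiteman classes of order 2\<close>

lemma sum_unit_root_crt:
  fixes F H :: "nat \<Rightarrow> complex"
  assumes pq: "coprime p q" "p > 0" "q > 0"
    and u: "[u * q = 1] (mod p)" and v: "[v * p = 1] (mod q)"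
  shows "(\<Sum>k<p * q. F (k mod p) * H (k mod q) * unit_root (p * q) k)
       = (\<Sum>a<p. F a * unit_root p (u * a)) * (\<Sum>b<q. H b * unit_root q (v * b))"
proof -
  define c where "c = (\<lambda>(a, b). (u * q * a + v * p * b) mod (p * q))"
  have c_mod_p: "c (a, b) mod p = a" if "a < p" for a b
  proof -
    have "[u * q * a + v * p * b = 1 * a + 0] (mod p)"
      by (intro cong_add cong_mult[OF u cong_refl]) (simp add: cong_0_iff)
    thus ?thesis using that unfolding c_def by (simp add: cong_def mod_mod_cancel)
  qed
  have c_mod_q: "c (a, b) mod q = b" if "b < q" for a b
  proof -
    have "[u * q * a + v * p * b = 0 + 1 * b] (mod q)"
      by (intro cong_add cong_mult[OF v cong_refl]) (simp add: cong_0_iff)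
    thus ?thesis using that unfolding c_def by (simp add: cong_def mod_mod_cancel[of q "p * q"])
  qed
  have inj: "inj_on c ({..<p} \<times> {..<q})"
    by (intro inj_onI) (metis SigmaE lessThan_iff c_mod_p c_mod_q)
  moreover have "c ` ({..<p} \<times> {..<q}) \<subseteq> {..<p * q}" using pq unfolding c_def by auto
  ultimately have img: "c ` ({..<p} \<times> {..<q}) = {..<p * q}"
    by (simp add: card_image card_cartesian_product card_subset_eq)
  have root: "unit_root (p * q) (c (a, b)) = unit_root p (u * a) * unit_root q (v * b)" for a b
  proof -
    have "unit_root (p * q) (c (a, b)) = unit_root (p * q) (q * (u * a)) * unit_root (p * q) (p * (v * b))"
      unfolding c_def using pq by (simp add: unit_root_mod unit_root_add[symmetric] mult_ac)
    thus ?thesis using unit_root_cancel[of q p "u * a"] unit_root_cancel[of p q "v * b"] pq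
      by (simp add: mult.commute)
  qed
  have "(\<Sum>k<p * q. F (k mod p) * H (k mod q) * unit_root (p * q) k)
      = (\<Sum>(a, b)\<in>{..<p} \<times> {..<q}. F (c (a, b) mod p) * H (c (a, b) mod q) * unit_root (p * q) (c (a, b)))"
    by (subst img[symmetric], subst sum.reindex[OF inj]) (simp add: case_prod_beta)
  also have "\<dots> = (\<Sum>(a, b)\<in>{..<p} \<times> {..<q}. (F a * unit_root p (u * a)) * (H b * unit_root q (v * b)))"
    by (rule sum.cong[OF refl]) (auto simp: c_mod_p c_mod_q root mult_ac)
  also have "\<dots> = (\<Sum>a<p. F a * unit_root p (u * a)) * (\<Sum>b<q. H b * unit_root q (v * b))"
    by (simp add: sum_product sum.cartesian_product)
  finally show ?thesis .
qed

lemma inverse_mod_exists: assumes "coprime a (m::nat)" shows "\<exists>u. [u * a = 1] (mod m) \<and> coprime u m"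
proof -
  obtain u where u: "[a * u = 1] (mod m)" using cong_solve_coprime_nat[OF assms] by auto
  hence "coprime (a * u) m" using cong_imp_coprime[of 1 "a * u" m] by (simp add: cong_sym)
  thus ?thesis using u by (intro exI[of _ u]) (simp add: mult.commute)
qed

lemma wh_x_spec:
  assumes "coprime p q" "p > 0" "q > 0"
  shows "wh_x p q g < p * q \<and> [wh_x p q g = g] (mod p) \<and> [wh_x p q g = 1] (mod q)"
proof -
  let ?P = "\<lambda>x. x < p * q \<and> [x = g] (mod p) \<and> [x = 1] (mod q)"
  obtain y where y: "[y = g] (mod p)" "[y = 1] (mod q)"
    using binary_chinese_remainder_nat[OF assms(1)] by blast
  have "?P (y mod (p * q))"
    using y assms(2,3) by (simp add: cong_def mod_mod_cancel[of p "p * q"] mod_mod_cancel[of q "p * q"])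
  moreover have "x1 = x2" if "?P x1" "?P x2" for x1 x2
  proof -
    have "[x1 = x2] (mod p)" "[x1 = x2] (mod q)" using that by (meson cong_sym cong_trans)+
    hence "[x1 = x2] (mod p * q)" using assms(1) by (simp add: coprime_cong_mult_nat)
    thus ?thesis using that by (simp add: cong_less_modulus_unique_nat)
  qed
  ultimately have "\<exists>!x. ?P x" by blast
  from theI'[OF this] show ?thesis unfolding wh_x_def .
qed

text \<open>Stated with \<open>(-1) ^ 0\<close> and \<open>(-1) ^ 1\<close> so that it rewrites the unfolded class sums literally.\<close>

lemma sign_product_indicators:
  fixes x y :: int and z :: complex
  assumes "x \<in> {-1, 0, 1}" "y \<in> {-1, 0, 1}"
  shows "(if x * y = (-1) ^ 0 then z else 0) + (if x * y = (-1) ^ 1 then z else 0) = (of_int x)\<^sup>2 * (of_int y)\<^sup>2 * z"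
    and "(if x * y = (-1) ^ 0 then z else 0) - (if x * y = (-1) ^ 1 then z else 0) = of_int x * of_int y * z"
  using assms by auto

definition quad_char_class :: "nat \<Rightarrow> nat \<Rightarrow> nat \<Rightarrow> nat set" where
  "quad_char_class p q i = {k. k < p * q \<and> quad_char p k * quad_char q k = (-1) ^ i}"

context
  fixes p q g :: nat
  assumes p: "prime p" "p > 2" and q: "prime q" "q > 2" and "p \<noteq> q"
    and gcd2: "gcd (p - 1) (q - 1) = 2"
    and gp: "residue_primroot p g" and gq: "residue_primroot q g"
begin

lemma coprime_moduli: "coprime p q"
  using p q \<open>p \<noteq> q\<close> by (simp add: primes_coprime)

lemma quad_char_wh_x: "quad_char p (wh_x p q g) = -1" "quad_char q (wh_x p q g) = 1"
proof -
  have "[wh_x p q g = g] (mod p)" "[wh_x p q g = 1] (mod q)"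
    using wh_x_spec[OF coprime_moduli, of g] p q by auto
  thus "quad_char p (wh_x p q g) = -1" "quad_char q (wh_x p q g) = 1"
    using quad_char_primroot[OF p gp] quad_char_1[OF q] by (auto dest: quad_char_cong)
qed

lemma coprime_wh_x: "coprime (wh_x p q g) (p * q)"
proof -
  have x: "[wh_x p q g = g] (mod p)" "[wh_x p q g = 1] (mod q)"
    using wh_x_spec[OF coprime_moduli, of g] p q by auto
  have "coprime g p" using gp by (simp add: residue_primroot_def coprime_commute)
  hence "coprime (wh_x p q g) p" using cong_imp_coprime[OF cong_sym[OF x(1)]] by blast
  moreover have "coprime (wh_x p q g) q" using cong_imp_coprime[OF cong_sym[OF x(2)]] by simp
  ultimately show ?thesis by simp
qed

lemma ord_primroot_mod_product: "ord (p * q) g = wh_e p q"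
proof -
  have "ord p g = p - 1" "ord q g = q - 1"
    using gp gq p q by (simp_all add: residue_primroot_def totient_prime)
  hence "ord (p * q) g = lcm (p - 1) (q - 1)"
    using ord_modulus_mult_coprime[OF coprime_moduli] by simp
  moreover have "(p - 1) * (q - 1) = 2 * lcm (p - 1) (q - 1)"
    by (simp only: prod_gcd_lcm_nat[of "p - 1" "q - 1"] gcd2)
  ultimately show ?thesis unfolding wh_e_def by simp
qed

lemma card_wh_D: "card (wh_D p q g i) = wh_e p q"
proof -
  have "coprime (p * q) g" using gp gq by (simp add: residue_primroot_def)
  hence inj_pow: "inj_on (\<lambda>s. g ^ s mod (p * q)) {..<wh_e p q}"
    using inj_power_mod ord_primroot_mod_product by metis
  have "coprime (wh_x p q g ^ i) (p * q)" using coprime_wh_x by simp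
  hence "inj_on (\<lambda>s. g ^ s * wh_x p q g ^ i mod (p * q)) {..<wh_e p q}"
    using inj_pow unfolding inj_on_def by (auto simp: cong_def[symmetric] cong_mult_rcancel_nat)
  moreover have "wh_D p q g i = (\<lambda>s. g ^ s * wh_x p q g ^ i mod (p * q)) ` {..<wh_e p q}"
    unfolding wh_D_def by auto
  ultimately show ?thesis by (simp add: card_image)
qed

lemma wh_D_subset: "wh_D p q g i \<subseteq> quad_char_class p q i"
proof
  fix k assume "k \<in> wh_D p q g i"
  then obtain s where k: "k = g ^ s * wh_x p q g ^ i mod (p * q)" unfolding wh_D_def by blast
  have "[k = g ^ s * wh_x p q g ^ i] (mod p)" "[k = g ^ s * wh_x p q g ^ i] (mod q)"
    unfolding k by (simp_all add: cong_def mod_mod_cancel[of p "p * q"] mod_mod_cancel[of q "p * q"])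
  hence "quad_char p k = quad_char p (g ^ s * wh_x p q g ^ i)" "quad_char q k = quad_char q (g ^ s * wh_x p q g ^ i)"
    by (simp_all only: quad_char_cong)
  hence "quad_char p k * quad_char q k = (-1) ^ i"
    by (simp add: quad_char_mult[OF p] quad_char_mult[OF q] quad_char_power[OF p] quad_char_power[OF q]
        quad_char_wh_x quad_char_primroot[OF p gp] quad_char_primroot[OF q gq] power_mult_distrib[symmetric])
  moreover have "k < p * q" using k p q by simp
  ultimately show "k \<in> quad_char_class p q i" unfolding quad_char_class_def by simp
qed

lemma quad_char_classes_union: "quad_char_class p q 0 \<union> quad_char_class p q 1 = totatives (p * q)"
proof -
  have unit: "quad_char p k * quad_char q k \<in> {1, -1} \<longleftrightarrow> \<not> p dvd k \<and> \<not> q dvd k" for k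
    using quad_char_range[of p k] quad_char_range[of q k] quad_char_eq_0_iff[of p k] quad_char_eq_0_iff[of q k]
    by auto
  have totative: "k \<in> totatives (p * q) \<longleftrightarrow> k < p * q \<and> \<not> p dvd k \<and> \<not> q dvd k" for k
  proof -
    have "coprime k (p * q) \<longleftrightarrow> \<not> p dvd k \<and> \<not> q dvd k" using p q by (simp add: prime_coprime_iff_not_dvd)
    thus ?thesis unfolding totatives_def using p q by (auto simp: order.order_iff_strict intro!: Nat.gr0I)
  qed
  show ?thesis
  proof (rule Set.set_eqI)
    fix k
    have "k \<in> quad_char_class p q 0 \<union> quad_char_class p q 1
        \<longleftrightarrow> k < p * q \<and> quad_char p k * quad_char q k \<in> {1, -1}"
      unfolding quad_char_class_def by auto
    thus "k \<in> quad_char_class p q 0 \<union> quad_char_class p q 1 \<longleftrightarrow> k \<in> totatives (p * q)"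
      by (simp only: unit totative)
  qed
qed

lemma wh_D_eq_quad_char_class: assumes "i \<le> 1" shows "wh_D p q g i = quad_char_class p q i"
proof -
  have fin: "finite (quad_char_class p q j)" for j unfolding quad_char_class_def by simp
  have "card (quad_char_class p q 0) + card (quad_char_class p q 1) = totient (p * q)"
    unfolding totient_def quad_char_classes_union[symmetric]
    by (rule card_Un_disjoint[symmetric]) (auto simp: fin quad_char_class_def)
  also have "\<dots> = 2 * wh_e p q"
  proof -
    have "even (p - 1)" using p by (simp add: prime_odd_nat)
    thus ?thesis using totient_mult_coprime[OF coprime_moduli] p q by (simp add: totient_prime wh_e_def)
  qed
  finally have sum: "card (quad_char_class p q 0) + card (quad_char_class p q 1) = 2 * wh_e p q" .
  have le: "wh_e p q \<le> card (quad_char_class p q j)" for j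
    using card_mono[OF fin wh_D_subset] card_wh_D by simp
  have "i = 0 \<or> i = 1" using assms by auto
  hence "card (quad_char_class p q i) = wh_e p q" using sum le[of 0] le[of 1] by (elim disjE; hypsubst; linarith)
  thus ?thesis using card_subset_eq[OF fin wh_D_subset] card_wh_D assms by simp
qed

lemma gauss_eta_eq_sum:
  assumes "j \<le> 1"
  shows "gauss_eta p q g j
    = (\<Sum>k<p * q. if quad_char p k * quad_char q k = (-1) ^ j then unit_root (p * q) k else 0)"
  unfolding gauss_eta_def wh_D_eq_quad_char_class[OF assms] quad_char_class_def
  using sum.inter_filter[of "{..<p * q}"] by simp

lemma gauss_eta_add: "gauss_eta p q g 0 + gauss_eta p q g 1 = 1"
proof -
  obtain u where u: "[u * q = 1] (mod p)" "coprime u p"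
    using inverse_mod_exists[of q p] coprime_moduli by (auto simp: coprime_commute)
  obtain v where v: "[v * p = 1] (mod q)" "coprime v q"
    using inverse_mod_exists[of p q] coprime_moduli by auto
  have "gauss_eta p q g 0 + gauss_eta p q g 1 = (\<Sum>k<p * q.
      (of_int (quad_char p (k mod p)))\<^sup>2 * (of_int (quad_char q (k mod q)))\<^sup>2 * unit_root (p * q) k)"
    unfolding gauss_eta_eq_sum[OF le0] gauss_eta_eq_sum[OF le_refl] sum.distrib[symmetric]
    by (rule sum.cong[OF refl], simp only: sign_product_indicators[OF quad_char_range quad_char_range], simp)
  also have "\<dots> = (\<Sum>a<p. (of_int (quad_char p a))\<^sup>2 * unit_root p (a * u))
      * (\<Sum>b<q. (of_int (quad_char q b))\<^sup>2 * unit_root q (b * v))"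
    using sum_unit_root_crt[OF coprime_moduli _ _ u(1) v(1), where F = "\<lambda>a. (of_int (quad_char p a))\<^sup>2"
        and H = "\<lambda>b. (of_int (quad_char q b))\<^sup>2"] p q by (simp add: mult_ac)
  also have "\<dots> = 1"
    using u(2) v(2) p q by (simp add: sum_quad_char_square_unit_root prime_coprime_iff_not_dvd)
  finally show ?thesis .
qed

lemma gauss_eta_diff:
  "\<exists>c::int. c \<in> {1, -1} \<and> gauss_eta p q g 0 - gauss_eta p q g 1 = of_int c * quad_gauss_sum p * quad_gauss_sum q"
proof -
  obtain u where u: "[u * q = 1] (mod p)" "coprime u p"
    using inverse_mod_exists[of q p] coprime_moduli by (auto simp: coprime_commute)
  obtain v where v: "[v * p = 1] (mod q)" "coprime v q"
    using inverse_mod_exists[of p q] coprime_moduli by auto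
  have "gauss_eta p q g 0 - gauss_eta p q g 1 = (\<Sum>k<p * q.
      of_int (quad_char p (k mod p)) * of_int (quad_char q (k mod q)) * unit_root (p * q) k)"
    unfolding gauss_eta_eq_sum[OF le0] gauss_eta_eq_sum[OF le_refl] sum_subtractf[symmetric]
    by (rule sum.cong[OF refl], simp only: sign_product_indicators[OF quad_char_range quad_char_range], simp)
  also have "\<dots> = (\<Sum>a<p. of_int (quad_char p a) * unit_root p (u * a))
      * (\<Sum>b<q. of_int (quad_char q b) * unit_root q (v * b))"
    using sum_unit_root_crt[OF coprime_moduli _ _ u(1) v(1), where F = "\<lambda>a. of_int (quad_char p a)"
        and H = "\<lambda>b. of_int (quad_char q b)"] p q by simp
  also have "\<dots> = of_int (quad_char p u * quad_char q v) * quad_gauss_sum p * quad_gauss_sum q"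
    by (simp add: quad_gauss_sum_twist[OF p u(2)] quad_gauss_sum_twist[OF q v(2)])
  finally show ?thesis
    using quad_char_range[of p u] quad_char_range[of q v] u(2) v(2) p q
    by (auto simp: quad_char_eq_0_iff prime_coprime_iff_not_dvd)
qed

end

lemma sum_diff_halves:
  fixes x y s d :: complex
  assumes "x + y = s" "x - y = d"
  shows "x = (s + d) / 2" "y = (s - d) / 2"
  using assms by (auto simp: field_simps)

theorem lemma2:
  fixes p q g :: nat
  assumes "prime p" and "prime q" and "p \<noteq> q" and "odd p" and "odd q"
    and "p mod 4 = 1" and "q mod 4 = 3"
    and "gcd (p - 1) (q - 1) = 2"
    and "residue_primroot p g" and "residue_primroot q g"
  shows "\<exists>\<epsilon>::int. \<epsilon> \<in> {1, -1} \<and>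
    (gauss_eta p q g 0)\<^sup>2 * (gauss_delta p g 1 * gauss_delta q g 1 + gauss_delta p g 0 * gauss_delta q g 0)
    + (gauss_eta p q g 1)\<^sup>2 * (gauss_delta p g 1 * gauss_delta q g 0 + gauss_delta p g 0 * gauss_delta q g 1)
    = (1 - of_nat (p * q)) / 4 + of_int \<epsilon> * of_nat (p * q) / 2"
proof -
  have p: "prime p" "p > 2" and q: "prime q" "q > 2"
    using prime_ge_2_nat[of p] prime_ge_2_nat[of q] assms(1,2,4,5) by (auto simp: le_less)
  obtain c where c: "c \<in> {1, -1}"
    and eta_diff: "gauss_eta p q g 0 - gauss_eta p q g 1 = of_int c * quad_gauss_sum p * quad_gauss_sum q"
    using gauss_eta_diff[OF p q assms(3,8-10)] by blast
  note eta = sum_diff_halves[OF gauss_eta_add[OF p q assms(3,8-10)] eta_diff]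
  note delta_p = sum_diff_halves[OF gauss_delta_add[OF p assms(9)] gauss_delta_diff[OF p assms(9)]]
  note delta_q = sum_diff_halves[OF gauss_delta_add[OF q assms(10)] gauss_delta_diff[OF q assms(10)]]
  have "even ((p - 1) div 2)" "odd ((q - 1) div 2)" using assms(6,7) by presburger+
  hence "(quad_gauss_sum p)\<^sup>2 = of_nat p" "(quad_gauss_sum q)\<^sup>2 = - of_nat q"
    using quad_gauss_sum_square[OF p] quad_gauss_sum_square[OF q] quad_char_minus_1[OF p] quad_char_minus_1[OF q]
    by simp_all
  moreover have "(of_int c :: complex)\<^sup>2 = 1" using c by auto
  ultimately show ?thesis
    unfolding eta delta_p delta_q using c
    by (intro exI[of _ "- c"]) (auto simp: field_simps power2_eq_square)
qed

end
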